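(* Suppose that for every $\theta\in\Theta$, $u_\theta:\mathbb R^{d_x}\to\mathbb R$ is concave and differentiable with $\|\nabla u_\theta(x)\|\le B_u$ for all $x$ and $\nabla u_\theta$ $L_u$-Lipschitz, and that $\beta_{\max}L_u<1$. Then for all $\beta,\beta'\in[\beta_{\min},\beta_{\max}]$ and $\theta\in\Theta$, $$\mathcal W(\mathcal D_\beta(\theta),\mathcal D_{\beta'}(\theta))\le\frac{B_u}{1-\beta_{\max}L_u}|\beta-\beta'|,$$ i.e. the atlas is $\epsilon_W$-smooth in Wasserstein distance with $\epsilon_W\le B_u/(1-\beta_{\max}L_u)$.
   Context: Strategic regression: $0<\beta_{\min}\le\beta_{\max}$. For $\beta\in[\beta_{\min},\beta_{\max}]$, $\theta\in\Theta$, and $x_0\in\mathbb R^{d_x}$, the best response is $g_\beta(x_0,\theta)=\arg\max_{x\in\mathbb R^{d_x}}\big(u_\theta(x)-\frac{1}{2\beta}\|x-x_0\|^2\big)$. Given a base distribution $\mathcal D_0$ of feature–label pairs $(x_0,y)$, the atlas is defined by: $(x,y)\sim\mathcal D_\beta(\theta)$ iff $(x_0,y)\sim\mathcal D_0$ and $x=g_\beta(x_0,\theta)$. $\mathcal W$ denotes the Wasserstein-1 distance (Euclidean norm on $(x,y)$). *)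

theory Defs
  imports "HOL-Probability.Probability"
begin

definition best_response :: "real \<Rightarrow> ('a::real_normed_vector \<Rightarrow> real) \<Rightarrow> 'a \<Rightarrow> 'a" where
  "best_response \<beta> u x0 =
     (SOME x. \<forall>z. u z - (1 / (2 * \<beta>)) * (norm (z - x0))\<^sup>2 \<le> u x - (1 / (2 * \<beta>)) * (norm (x - x0))\<^sup>2)"

definition atlas :: "real \<Rightarrow> ('a::euclidean_space \<Rightarrow> real) \<Rightarrow> ('a \<times> 'b::euclidean_space) measure
                      \<Rightarrow> ('a \<times> 'b) measure" where
  "atlas \<beta> u D0 = distr D0 borel (\<lambda>(x0, y). (best_response \<beta> u x0, y))"

definition couplings :: "'c::euclidean_space measure \<Rightarrow> 'c measure \<Rightarrow> ('c \<times> 'c) measure set" where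
  "couplings \<mu> \<nu> = {\<pi>. prob_space \<pi> \<and> sets \<pi> = sets borel \<and>
                        distr \<pi> borel fst = \<mu> \<and> distr \<pi> borel snd = \<nu>}"

definition wasserstein1 :: "'c::euclidean_space measure \<Rightarrow> 'c measure \<Rightarrow> ennreal" where
  "wasserstein1 \<mu> \<nu> = (INF \<pi>\<in>couplings \<mu> \<nu>. \<integral>\<^sup>+ p. ennreal (dist (fst p) (snd p)) \<partial>\<pi>)"

end

theory Submission
  imports Defs
begin

text \<open>
  For concave \<open>u\<close> the best response \<open>x = g\<^sub>\<beta>(x\<^sub>0)\<close> is characterised by the first-order
  condition \<open>x = x\<^sub>0 + \<beta> \<nabla>u(x)\<close>; since \<open>\<beta> L\<^sub>u < 1\<close> the right-hand side is a contraction in \<open>x\<close>,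
  so this fixed point exists and is the unique maximiser.  Subtracting the conditions for
  \<open>\<beta>\<close> and \<open>\<beta>'\<close> gives \<open>\<parallel>x - x'\<parallel> \<le> B\<^sub>u \<bar>\<beta> - \<beta>'\<bar> + \<beta>' L\<^sub>u \<parallel>x - x'\<parallel>\<close>.  Coupling \<open>\<D>\<^sub>\<beta>(\<theta>)\<close> and
  \<open>\<D>\<^sub>\<beta>\<^sub>'(\<theta>)\<close> through the common base point \<open>(x\<^sub>0, y)\<close> therefore moves every point by at
  most \<open>B\<^sub>u \<bar>\<beta> - \<beta>'\<bar> / (1 - \<beta>\<^sub>m\<^sub>a\<^sub>x L\<^sub>u)\<close>.
\<close>

lemma concave_on_gderiv_le:
  fixes f :: "'a::real_inner \<Rightarrow> real"
  assumes concave: "concave_on UNIV f" and gderiv: "GDERIV f x :> g"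
  shows "f z \<le> f x + g \<bullet> (z - x)"
proof -
  txt \<open>Difference quotients of \<open>f\<close> along the segment from \<open>x\<close> to \<open>z\<close> dominate \<open>f z - f x\<close> and
    converge to the directional derivative.\<close>
  define h where "h = z - x"
  define \<phi> where "\<phi> = (\<lambda>t::real. f (x + t *\<^sub>R h))"
  have "((\<lambda>t::real. x + t *\<^sub>R h) has_derivative (\<lambda>t. t *\<^sub>R h)) (at 0)"
    by (auto intro!: derivative_eq_intros)
  moreover have "(f has_derivative (\<lambda>v. v \<bullet> g)) (at (x + 0 *\<^sub>R h))"
    using gderiv by (simp add: gderiv_def)
  ultimately have "(\<phi> has_derivative (\<lambda>t. (t *\<^sub>R h) \<bullet> g)) (at 0)"
    unfolding \<phi>_def by (rule has_derivative_compose[unfolded o_def])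
  moreover have "(\<lambda>t. (t *\<^sub>R h) \<bullet> g) = (*) (g \<bullet> h)"
    by (auto simp: inner_commute)
  ultimately have "(\<phi> has_real_derivative (g \<bullet> h)) (at 0)"
    by (simp add: has_field_derivative_def)
  then have "((\<lambda>t. (\<phi> t - \<phi> 0) / (t - 0)) \<longlongrightarrow> g \<bullet> h) (at_right 0)"
    unfolding has_field_derivative_iff filterlim_at_split by simp
  moreover have "eventually (\<lambda>t. f z - f x \<le> (\<phi> t - \<phi> 0) / (t - 0)) (at_right 0)"
    unfolding eventually_at_right_field
  proof (intro exI[of _ 1] conjI allI impI)
    fix t :: real assume t: "0 < t" "t < 1"
    have "(1 - t) * f x + t * f z \<le> f ((1 - t) *\<^sub>R x + t *\<^sub>R z)"
      using concave_onD[OF concave, of t x z] t by simp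
    moreover have "(1 - t) *\<^sub>R x + t *\<^sub>R z = x + t *\<^sub>R h"
      by (simp add: h_def algebra_simps)
    ultimately have "t * (f z - f x) \<le> \<phi> t - \<phi> 0"
      by (simp add: \<phi>_def algebra_simps)
    then show "f z - f x \<le> (\<phi> t - \<phi> 0) / (t - 0)"
      using t by (simp add: field_simps)
  qed simp
  ultimately have "f z - f x \<le> g \<bullet> h"
    by (rule tendsto_lowerbound) simp
  then show ?thesis by (simp add: h_def)
qed

text \<open>The penalised objective is \<open>1/\<beta>\<close>-strongly concave, which yields the quadratic slack.\<close>

lemma first_order_fixed_point_maximises:
  fixes f :: "'a::real_inner \<Rightarrow> real"
  assumes concave: "concave_on UNIV f" and gderiv: "\<And>x. GDERIV f x :> g x" and "0 < \<beta>"
    and fixed: "x = x0 + \<beta> *\<^sub>R g x"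
  shows "f z - (1 / (2 * \<beta>)) * (norm (z - x0))\<^sup>2
     \<le> f x - (1 / (2 * \<beta>)) * (norm (x - x0))\<^sup>2 - (1 / (2 * \<beta>)) * (norm (z - x))\<^sup>2"
proof -
  have "x - x0 = \<beta> *\<^sub>R g x"
    using fixed by (simp add: algebra_simps)
  then have inner_eq: "(x - x0) \<bullet> (z - x) = \<beta> * (g x \<bullet> (z - x))"
    by simp
  have "(norm (z - x0))\<^sup>2 = (norm (x - x0))\<^sup>2 + 2 * ((x - x0) \<bullet> (z - x)) + (norm (z - x))\<^sup>2"
    unfolding power2_norm_eq_inner by (simp add: algebra_simps inner_commute)
  then have "(1 / (2 * \<beta>)) * (norm (z - x0))\<^sup>2
      = (1 / (2 * \<beta>)) * (norm (x - x0))\<^sup>2 + (1 / (2 * \<beta>)) * (norm (z - x))\<^sup>2 + g x \<bullet> (z - x)"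
    unfolding inner_eq using \<open>0 < \<beta>\<close> by (simp add: field_simps)
  moreover have "f z \<le> f x + g x \<bullet> (z - x)"
    using concave_on_gderiv_le[OF concave gderiv] .
  ultimately show ?thesis by linarith
qed

text \<open>The quadratic slack makes \<open>x\<close> the unique maximiser, so the choice in \<^const>\<open>best_response\<close> is forced.\<close>

lemma best_response_eqI:
  assumes "0 < \<beta>"
    and max: "\<And>z. u z - (1 / (2 * \<beta>)) * (norm (z - x0))\<^sup>2
                 \<le> u x - (1 / (2 * \<beta>)) * (norm (x - x0))\<^sup>2 - (1 / (2 * \<beta>)) * (norm (z - x))\<^sup>2"
  shows "best_response \<beta> u x0 = x"
proof -
  define obj where "obj = (\<lambda>z. u z - (1 / (2 * \<beta>)) * (norm (z - x0))\<^sup>2)"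
  define c where "c = 1 / (2 * \<beta>)"
  have "c > 0"
    using \<open>0 < \<beta>\<close> by (simp add: c_def)
  have slack: "obj z \<le> obj x - c * (norm (z - x))\<^sup>2" for z
    using max[of z] unfolding obj_def c_def .
  have "obj z \<le> obj x" for z
    using slack[of z] \<open>c > 0\<close> by (smt (verit) mult_nonneg_nonneg zero_le_power2)
  then have "\<forall>z. obj z \<le> obj (SOME y. \<forall>z. obj z \<le> obj y)"
    by (rule someI[where x = x, OF allI])
  moreover have "best_response \<beta> u x0 = (SOME y. \<forall>z. obj z \<le> obj y)"
    unfolding best_response_def obj_def ..
  ultimately have "obj x \<le> obj (best_response \<beta> u x0)"
    by simp
  then have "c * (norm (best_response \<beta> u x0 - x))\<^sup>2 \<le> 0"
    using slack[of "best_response \<beta> u x0"] by linarith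
  with \<open>c > 0\<close> show ?thesis
    by (simp add: mult_le_0_iff)
qed

locale concave_utility =
  fixes u :: "'a::euclidean_space \<Rightarrow> real" and grad :: "'a \<Rightarrow> 'a" and L :: real
  assumes concave: "concave_on UNIV u"
    and gderiv: "\<And>x. GDERIV u x :> grad x"
    and grad_lipschitz: "\<And>x x'. norm (grad x - grad x') \<le> L * norm (x - x')"
begin

lemma lipschitz_constant_nonneg: "0 \<le> L"
proof -
  obtain e :: 'a where "e \<in> Basis"
    using nonempty_Basis by blast
  with grad_lipschitz[of e 0] show ?thesis
    by (smt (verit) norm_Basis norm_ge_zero diff_zero mult_cancel_left1)
qed

lemma first_order_fixed_point_exists:
  assumes "0 < \<beta>" and "\<beta> * L < 1"
  obtains x where "x = x0 + \<beta> *\<^sub>R grad x"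
proof -
  have "\<exists>!x. x0 + \<beta> *\<^sub>R grad x = x"
  proof (rule banach_fix_type[of "\<beta> * L"])
    show "0 \<le> \<beta> * L"
      using \<open>0 < \<beta>\<close> lipschitz_constant_nonneg by simp
    show "\<forall>x y. dist (x0 + \<beta> *\<^sub>R grad x) (x0 + \<beta> *\<^sub>R grad y) \<le> \<beta> * L * dist x y"
    proof (intro allI)
      fix x y
      have "dist (x0 + \<beta> *\<^sub>R grad x) (x0 + \<beta> *\<^sub>R grad y) = \<beta> * norm (grad x - grad y)"
        using \<open>0 < \<beta>\<close> by (simp add: dist_norm scaleR_diff_right[symmetric])
      also have "\<dots> \<le> \<beta> * (L * norm (x - y))"
        using grad_lipschitz \<open>0 < \<beta>\<close> by (simp add: mult_left_mono)
      finally show "dist (x0 + \<beta> *\<^sub>R grad x) (x0 + \<beta> *\<^sub>R grad y) \<le> \<beta> * L * dist x y"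
        by (simp add: dist_norm mult.assoc)
    qed
  qed fact
  then show ?thesis
    using that by metis
qed

lemma best_response_first_order:
  assumes "0 < \<beta>" and "\<beta> * L < 1"
  shows "best_response \<beta> u x0 = x0 + \<beta> *\<^sub>R grad (best_response \<beta> u x0)"
proof -
  obtain x where fixed: "x = x0 + \<beta> *\<^sub>R grad x"
    using first_order_fixed_point_exists[OF assms] .
  have "best_response \<beta> u x0 = x"
    using best_response_eqI[OF \<open>0 < \<beta>\<close> first_order_fixed_point_maximises[OF concave gderiv \<open>0 < \<beta>\<close> fixed]] .
  with fixed show ?thesis by simp
qed

lemma best_response_lipschitz:
  assumes "0 < \<beta>" and "\<beta> * L < 1"
  shows "(1 / (1 - \<beta> * L))-lipschitz_on UNIV (best_response \<beta> u)"
proof (rule lipschitz_onI)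
  let ?x = "best_response \<beta> u"
  show "0 \<le> 1 / (1 - \<beta> * L)"
    using \<open>\<beta> * L < 1\<close> by simp
  fix a c :: 'a
  have "?x a - ?x c = (a - c) + \<beta> *\<^sub>R (grad (?x a) - grad (?x c))"
    using best_response_first_order[OF assms, of a] best_response_first_order[OF assms, of c]
    by (metis add_diff_add scaleR_diff_right)
  then have "norm (?x a - ?x c) \<le> norm (a - c) + \<beta> * norm (grad (?x a) - grad (?x c))"
    using \<open>0 < \<beta>\<close> by (metis abs_of_pos norm_scaleR norm_triangle_ineq)
  also have "\<dots> \<le> norm (a - c) + \<beta> * (L * norm (?x a - ?x c))"
    using grad_lipschitz \<open>0 < \<beta>\<close> by (simp add: mult_left_mono)
  finally have "(1 - \<beta> * L) * norm (?x a - ?x c) \<le> norm (a - c)"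
    by (simp add: algebra_simps)
  then show "dist (?x a) (?x c) \<le> 1 / (1 - \<beta> * L) * dist a c"
    using \<open>\<beta> * L < 1\<close> by (simp add: dist_norm field_simps mult.commute)
qed

lemma continuous_on_best_response:
  assumes "0 < \<beta>" and "\<beta> * L < 1"
  shows "continuous_on UNIV (best_response \<beta> u)"
  using best_response_lipschitz[OF assms] by (rule lipschitz_on_continuous_on)

lemma norm_best_response_diff_le:
  assumes grad_bounded: "\<And>x. norm (grad x) \<le> B"
    and "0 < \<beta>" and "\<beta> * L < 1" and "0 < \<beta>'" and "\<beta>' * L < 1"
  shows "norm (best_response \<beta> u x0 - best_response \<beta>' u x0) \<le> B / (1 - \<beta>' * L) * \<bar>\<beta> - \<beta>'\<bar>"
proof -
  let ?x = "best_response \<beta> u x0" and ?x' = "best_response \<beta>' u x0"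
  have "?x - x0 = \<beta> *\<^sub>R grad ?x" "?x' - x0 = \<beta>' *\<^sub>R grad ?x'"
    using best_response_first_order[of \<beta> x0] best_response_first_order[of \<beta>' x0] assms
    by (metis add_diff_cancel_left')+
  then have "?x - ?x' = \<beta> *\<^sub>R grad ?x - \<beta>' *\<^sub>R grad ?x'"
    by (metis diff_diff_eq2 diff_add_cancel add_diff_eq)
  also have "\<dots> = (\<beta> - \<beta>') *\<^sub>R grad ?x + \<beta>' *\<^sub>R (grad ?x - grad ?x')"
    by (simp add: algebra_simps)
  finally have "?x - ?x' = (\<beta> - \<beta>') *\<^sub>R grad ?x + \<beta>' *\<^sub>R (grad ?x - grad ?x')" .
  then have "norm (?x - ?x') \<le> \<bar>\<beta> - \<beta>'\<bar> * norm (grad ?x) + \<beta>' * norm (grad ?x - grad ?x')"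
    using \<open>0 < \<beta>'\<close> by (metis abs_of_pos norm_scaleR norm_triangle_ineq)
  also have "\<dots> \<le> \<bar>\<beta> - \<beta>'\<bar> * B + \<beta>' * (L * norm (?x - ?x'))"
    using grad_lipschitz grad_bounded \<open>0 < \<beta>'\<close> by (intro add_mono mult_left_mono) auto
  finally have "(1 - \<beta>' * L) * norm (?x - ?x') \<le> B * \<bar>\<beta> - \<beta>'\<bar>"
    by (simp add: algebra_simps)
  with \<open>\<beta>' * L < 1\<close> show ?thesis
    by (simp add: field_simps)
qed

end

lemma wasserstein1_distr_le:
  fixes \<phi> \<psi> :: "'d \<Rightarrow> 'c::euclidean_space"
  assumes "prob_space M" and \<phi>: "\<phi> \<in> M \<rightarrow>\<^sub>M borel" and \<psi>: "\<psi> \<in> M \<rightarrow>\<^sub>M borel"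
    and close: "\<And>x. x \<in> space M \<Longrightarrow> dist (\<phi> x) (\<psi> x) \<le> C"
  shows "wasserstein1 (distr M borel \<phi>) (distr M borel \<psi>) \<le> ennreal C"
proof -
  txt \<open>Couple the two push-forwards through their common source.\<close>
  define F where "F = (\<lambda>x. (\<phi> x, \<psi> x))"
  define \<pi> where "\<pi> = distr M borel F"
  have F: "F \<in> M \<rightarrow>\<^sub>M borel"
    unfolding F_def borel_prod[symmetric] using \<phi> \<psi> by measurable
  have "\<pi> \<in> couplings (distr M borel \<phi>) (distr M borel \<psi>)"
    unfolding couplings_def
  proof (intro CollectI conjI)
    show "prob_space \<pi>"
      unfolding \<pi>_def using F \<open>prob_space M\<close> by (simp add: prob_space.prob_space_distr)
    have "distr \<pi> borel fst = distr M borel (fst \<circ> F)"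
      unfolding \<pi>_def by (rule distr_distr) (use F in \<open>simp_all add: borel_prod[symmetric]\<close>)
    then show "distr \<pi> borel fst = distr M borel \<phi>"
      by (simp add: F_def o_def)
    have "distr \<pi> borel snd = distr M borel (snd \<circ> F)"
      unfolding \<pi>_def by (rule distr_distr) (use F in \<open>simp_all add: borel_prod[symmetric]\<close>)
    then show "distr \<pi> borel snd = distr M borel \<psi>"
      by (simp add: F_def o_def)
  qed (simp add: \<pi>_def)
  then have "wasserstein1 (distr M borel \<phi>) (distr M borel \<psi>) \<le> (\<integral>\<^sup>+ p. ennreal (dist (fst p) (snd p)) \<partial>\<pi>)"
    unfolding wasserstein1_def by (rule INF_lower)
  also have "\<dots> = (\<integral>\<^sup>+ x. ennreal (dist (\<phi> x) (\<psi> x)) \<partial>M)"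
    unfolding \<pi>_def using F
    by (subst nn_integral_distr) (auto simp: F_def intro!: borel_measurable_continuous_onI continuous_intros)
  also have "\<dots> \<le> (\<integral>\<^sup>+ x. ennreal C \<partial>M)"
    using close by (intro nn_integral_mono ennreal_leI)
  also have "\<dots> = ennreal C"
    using \<open>prob_space M\<close> by (simp add: prob_space.emeasure_space_1)
  finally show ?thesis .
qed

lemma continuous_map_fst_borel_measurable:
  fixes G :: "'a::topological_space \<Rightarrow> 'c::topological_space"
  assumes "continuous_on UNIV G"
  shows "(\<lambda>(x, y::'b::topological_space). (G x, y)) \<in> borel_measurable borel"
  unfolding case_prod_beta
  by (intro borel_measurable_continuous_onI continuous_on_Pair continuous_on_snd continuous_on_id
      continuous_on_compose2[OF assms continuous_on_fst]) auto

theorem claim1: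
  fixes u :: "'th \<Rightarrow> 'a::euclidean_space \<Rightarrow> real"
    and grad_u :: "'th \<Rightarrow> 'a \<Rightarrow> 'a"
    and \<Theta> :: "'th set"
    and D0 :: "('a \<times> 'b::euclidean_space) measure"
    and \<beta>min \<beta>max B_u L_u :: real
  assumes "0 < \<beta>min" and "\<beta>min \<le> \<beta>max"
    and "prob_space D0" and "sets D0 = sets borel"
    and "\<forall>\<theta>\<in>\<Theta>. concave_on UNIV (u \<theta>)"
    and "\<forall>\<theta>\<in>\<Theta>. \<forall>x. GDERIV (u \<theta>) x :> grad_u \<theta> x"
    and "\<forall>\<theta>\<in>\<Theta>. \<forall>x. norm (grad_u \<theta> x) \<le> B_u"
    and "\<forall>\<theta>\<in>\<Theta>. \<forall>x x'. norm (grad_u \<theta> x - grad_u \<theta> x') \<le> L_u * norm (x - x')"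
    and "\<beta>max * L_u < 1"
  shows "\<forall>\<beta>\<in>{\<beta>min..\<beta>max}. \<forall>\<beta>'\<in>{\<beta>min..\<beta>max}. \<forall>\<theta>\<in>\<Theta>.
           wasserstein1 (atlas \<beta> (u \<theta>) D0) (atlas \<beta>' (u \<theta>) D0)
             \<le> ennreal (B_u / (1 - \<beta>max * L_u) * \<bar>\<beta> - \<beta>'\<bar>)"
proof (intro ballI)
  fix \<beta> \<beta>' \<theta> assume \<beta>: "\<beta> \<in> {\<beta>min..\<beta>max}" and \<beta>': "\<beta>' \<in> {\<beta>min..\<beta>max}" and "\<theta> \<in> \<Theta>"
  interpret concave_utility "u \<theta>" "grad_u \<theta>" L_u
    using assms(5,6,8) \<open>\<theta> \<in> \<Theta>\<close> by unfold_locales auto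
  have grad_bounded: "\<And>x. norm (grad_u \<theta> x) \<le> B_u" and "0 \<le> B_u"
    using assms(7) \<open>\<theta> \<in> \<Theta>\<close> norm_ge_zero order_trans by blast+
  have "\<beta> * L_u \<le> \<beta>max * L_u" "\<beta>' * L_u \<le> \<beta>max * L_u"
    using \<beta> \<beta>' lipschitz_constant_nonneg by (simp_all add: mult_right_mono)
  moreover have "0 < \<beta>" "0 < \<beta>'"
    using \<beta> \<beta>' assms(1) by auto
  ultimately have params: "0 < \<beta>" "\<beta> * L_u < 1" "0 < \<beta>'" "\<beta>' * L_u < 1"
    and ratio: "B_u / (1 - \<beta>' * L_u) \<le> B_u / (1 - \<beta>max * L_u)"
    using assms(9) \<open>0 \<le> B_u\<close> by (auto intro!: divide_left_mono)
  have "dist (best_response \<beta> (u \<theta>) x0) (best_response \<beta>' (u \<theta>) x0)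
          \<le> B_u / (1 - \<beta>max * L_u) * \<bar>\<beta> - \<beta>'\<bar>" for x0
    unfolding dist_norm
    by (rule order_trans[OF norm_best_response_diff_le[OF grad_bounded params] mult_right_mono[OF ratio abs_ge_zero]])
  moreover have "(\<lambda>(x0, y). (best_response b (u \<theta>) x0, y)) \<in> D0 \<rightarrow>\<^sub>M borel"
    if "0 < b" "b * L_u < 1" for b
    using continuous_map_fst_borel_measurable[OF continuous_on_best_response[OF that]]
    by (simp add: measurable_cong_sets[OF assms(4) refl])
  ultimately show "wasserstein1 (atlas \<beta> (u \<theta>) D0) (atlas \<beta>' (u \<theta>) D0)
                     \<le> ennreal (B_u / (1 - \<beta>max * L_u) * \<bar>\<beta> - \<beta>'\<bar>)"
    unfolding atlas_def using params assms(3)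
    by (intro wasserstein1_distr_le) (auto simp: dist_Pair_Pair)
qed

end
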